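(* Let $\lambda^{(1)}/\mu^{(1)},\ldots,\lambda^{(k)}/\mu^{(k)}$ be skew shapes, none containing a $3\times 2$ block of cells, with $\ell(\lambda^{(i)})\le n$ for all $i$, and let $\vec H=(H^{(1)},\dots,H^{(k)})$ be a $(\underline\lambda,\underline\mu)$-multinetwork. For each $i$ let $I_i\subseteq[n-1]$ be the unique set with $\beta(H^{(i)})=2^{\epsilon(H^{(i)})}\mathbb B(I_i)$. Then \[\beta(\vec H)=2^{\epsilon(\vec H)}\,\mathbb B(I_1\cap\cdots\cap I_k),\qquad \epsilon(\vec H)=\epsilon(H^{(1)})+\cdots+\epsilon(H^{(k)}).\]
   Context: Skew shapes: for partitions $\mu\subseteq\lambda$, $\lambda/\mu$ is the set of cells $(i,j)$ with $\mu_i<j\le\lambda_i$; it contains a $3\times2$ block iff $\lambda_{i+2}\ge\mu_i+2$ for some $i$. Lattice paths: $\mathcal L$ is the directed graph on $\mathbb Z^2$ with edges $(a,b)\to(a,b-1)$ and $(a,b)\to(a-1,b-1)$; a path from $(a,\infty)$ consists of infinitely many south steps on $x=a$ followed by a finite path. For $\ell(\lambda)\le n$, $A(\lambda)_i=(\lambda_i+n-i,\infty)$, $B(\mu)_i=(\mu_i+n-i,0)$. A $(\lambda,\mu)$-path family is $(p_1,\dots,p_n)$ with $p_i:A(\lambda)_i\to B(\mu)_{\sigma(i)}$, $\sigma\in\mathfrak S_n$ its type. A $(\lambda,\mu)$-subnetwork is the multiset union $H$ of edges of a path family (which covers $H$); $\beta(H)\in\mathbb C[\mathfrak S_n]$ is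 the sum of the types of all path families covering $H$. $H$ is a generalized wiring diagram if no vertex lies on three paths of a covering family; then $\theta(\beta(H))=2^{\epsilon(H)}\psi(H)$ for a unique integer $\epsilon(H)$ and Kauffman diagram $\psi(H)\in\mathcal B_n$ (here $\theta:\mathbb C[\mathfrak S_n]\to\mathrm{TL}_n(2)$, $\theta(s_i)=t_i-1$, $\mathrm{TL}_n(2)$ the Temperley–Lieb algebra with parameter 2 and diagram basis $\mathcal B_n$). For shapes avoiding $3\times2$ blocks, every subnetwork is a generalized wiring diagram and $\beta(H)=2^{\epsilon(H)}\mathbb B(I)$ for a unique $I\subseteq[n-1]$, where $\mathbb B(I)=\prod_{i\in I}(1+s_i)$ (increasing order), $s_i=(i,i+1)$. Multinetworks: for tuples $\underline\lambda=(\lambda^{(1)},\dots,\lambda^{(k)})$, $\underline\mu=(\mu^{(1)},\dots,\mu^{(k)})$, a $(\underline\lambda,\underline\mu)$-multinetwork is $\vec H=(H^{(1)},\dots,H^{(k)})$ with each $H^{(i)}$ a $(\lambda^{(i)},\mu^{(i)})$-subnetwork; $\beta(\vec H)=\sum\sigma$, summed over all tuples $(\vec p^{(1)},\dots,\vec p^{(k)})$ such that $\vec p^{(i)}$ covers $H^{(i)}$ and all $\vec p^{(i)}$ have the same type $\sigma$. *)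

theory Defs
  imports Complex_Main "HOL-Combinatorics.Permutations" "HOL-Combinatorics.Transposition"
begin

text \<open>A partition is a weakly decreasing, eventually zero sequence, indexed from 1
  (the value at index 0 is irrelevant and never used).\<close>
definition is_partition :: "(nat \<Rightarrow> nat) \<Rightarrow> bool" where
  "is_partition lam \<longleftrightarrow> (\<forall>i\<ge>1. lam (Suc i) \<le> lam i) \<and> (\<exists>N. \<forall>i\<ge>N. lam i = 0)"

definition len_le :: "(nat \<Rightarrow> nat) \<Rightarrow> nat \<Rightarrow> bool" where
  "len_le lam n \<longleftrightarrow> (\<forall>i>n. lam i = 0)"

definition subpart :: "(nat \<Rightarrow> nat) \<Rightarrow> (nat \<Rightarrow> nat) \<Rightarrow> bool" where
  "subpart mu lam \<longleftrightarrow> (\<forall>i\<ge>1. mu i \<le> lam i)"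

definition has_3x2_block :: "(nat \<Rightarrow> nat) \<Rightarrow> (nat \<Rightarrow> nat) \<Rightarrow> bool" where
  "has_3x2_block lam mu \<longleftrightarrow> (\<exists>i\<ge>1. lam (i + 2) \<ge> mu i + 2)"

text \<open>A path from (a,infinity) to (c,0) in the lattice with steps (x,y)->(x,y-1) and
  (x,y)->(x-1,y-1) is encoded by its x-coordinate p y at each height y >= 0:
  going down from height y+1 to y, x stays or decreases by one; for all large y
  the path is on the line x = a; and p 0 = c.\<close>
definition lpath :: "int \<Rightarrow> int \<Rightarrow> (nat \<Rightarrow> int) \<Rightarrow> bool" where
  "lpath a c p \<longleftrightarrow> (\<forall>y. p (Suc y) = p y \<or> p (Suc y) = p y + 1)
                    \<and> (\<exists>N. \<forall>y\<ge>N. p y = a) \<and> p 0 = c"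

definition path_edge :: "(nat \<Rightarrow> int) \<Rightarrow> nat \<Rightarrow> (int \<times> int) \<times> (int \<times> int)" where
  "path_edge p y = ((p (Suc y), int (Suc y)), (p y, int y))"

definition Apt :: "nat \<Rightarrow> (nat \<Rightarrow> nat) \<Rightarrow> nat \<Rightarrow> int" where
  "Apt n lam i = int (lam i) + int n - int i"

definition Bpt :: "nat \<Rightarrow> (nat \<Rightarrow> nat) \<Rightarrow> nat \<Rightarrow> int" where
  "Bpt n mu i = int (mu i) + int n - int i"

text \<open>A (lam,mu)-path family of type sigma: paths indexed by 1..n (normalised to the
  constant function 0 outside 1..n), p_i from A(lam)_i to B(mu)_(sigma i).\<close>
definition path_family ::
  "nat \<Rightarrow> (nat \<Rightarrow> nat) \<Rightarrow> (nat \<Rightarrow> nat) \<Rightarrow> (nat \<Rightarrow> nat \<Rightarrow> int) \<Rightarrow> (nat \<Rightarrow> nat) \<Rightarrow> bool" where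
  "path_family n lam mu fam \<sigma> \<longleftrightarrow> \<sigma> permutes {1..n}
     \<and> (\<forall>i\<in>{1..n}. lpath (Apt n lam i) (Bpt n mu (\<sigma> i)) (fam i))
     \<and> (\<forall>i. i \<notin> {1..n} \<longrightarrow> fam i = (\<lambda>_. 0))"

definition edge_mult :: "nat \<Rightarrow> (nat \<Rightarrow> nat \<Rightarrow> int) \<Rightarrow> (int \<times> int) \<times> (int \<times> int) \<Rightarrow> nat" where
  "edge_mult n fam e = card {(i, y). i \<in> {1..n} \<and> path_edge (fam i) y = e}"

definition covers :: "nat \<Rightarrow> (nat \<Rightarrow> nat \<Rightarrow> int) \<Rightarrow> ((int \<times> int) \<times> (int \<times> int) \<Rightarrow> nat) \<Rightarrow> bool" where
  "covers n fam H \<longleftrightarrow> (\<forall>e. edge_mult n fam e = H e)"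

definition subnetwork ::
  "nat \<Rightarrow> (nat \<Rightarrow> nat) \<Rightarrow> (nat \<Rightarrow> nat) \<Rightarrow> ((int \<times> int) \<times> (int \<times> int) \<Rightarrow> nat) \<Rightarrow> bool" where
  "subnetwork n lam mu H \<longleftrightarrow> (\<exists>fam \<sigma>. path_family n lam mu fam \<sigma> \<and> covers n fam H)"

text \<open>Elements of C[S_n] are coefficient functions on permutations of {1..n}.
  Product convention: sigma*tau is "first sigma, then tau", i.e. the map tau o sigma.\<close>
type_synonym galg = "(nat \<Rightarrow> nat) \<Rightarrow> complex"

definition gmult :: "nat \<Rightarrow> galg \<Rightarrow> galg \<Rightarrow> galg" where
  "gmult n a b = (\<lambda>\<sigma>. if \<sigma> permutes {1..n}
      then (\<Sum>\<tau>\<in>{\<tau>. \<tau> permutes {1..n}}. a \<tau> * b (\<sigma> \<circ> inv \<tau>)) else 0)"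

definition gbasis :: "nat \<Rightarrow> (nat \<Rightarrow> nat) \<Rightarrow> galg" where
  "gbasis n \<pi> = (\<lambda>\<sigma>. if \<sigma> = \<pi> \<and> \<pi> permutes {1..n} then 1 else 0)"

definition gadd :: "galg \<Rightarrow> galg \<Rightarrow> galg" where
  "gadd a b = (\<lambda>\<sigma>. a \<sigma> + b \<sigma>)"

definition gscale :: "complex \<Rightarrow> galg \<Rightarrow> galg" where
  "gscale c a = (\<lambda>\<sigma>. c * a \<sigma>)"

definition s_gen :: "nat \<Rightarrow> nat \<Rightarrow> galg" where
  "s_gen n i = gbasis n (transpose i (Suc i))"

definition BB :: "nat \<Rightarrow> nat set \<Rightarrow> galg" where
  "BB n I = foldl (\<lambda>acc i. gmult n acc (gadd (gbasis n id) (s_gen n i))) (gbasis n id)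
              (sorted_list_of_set I)"

text \<open>beta(H) = sum of the types of all path families covering H; its coefficient at
  sigma is the number of covering families of type sigma.\<close>
definition beta ::
  "nat \<Rightarrow> (nat \<Rightarrow> nat) \<Rightarrow> (nat \<Rightarrow> nat) \<Rightarrow> ((int \<times> int) \<times> (int \<times> int) \<Rightarrow> nat) \<Rightarrow> galg" where
  "beta n lam mu H = (\<lambda>\<sigma>. of_nat (card {fam. path_family n lam mu fam \<sigma> \<and> covers n fam H}))"

definition beta_multi ::
  "nat \<Rightarrow> nat \<Rightarrow> (nat \<Rightarrow> nat \<Rightarrow> nat) \<Rightarrow> (nat \<Rightarrow> nat \<Rightarrow> nat)
     \<Rightarrow> (nat \<Rightarrow> (int \<times> int) \<times> (int \<times> int) \<Rightarrow> nat) \<Rightarrow> galg" where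
  "beta_multi n k lams mus Hs = (\<lambda>\<sigma>. of_nat (card
     {F :: nat \<Rightarrow> nat \<Rightarrow> nat \<Rightarrow> int.
        (\<forall>j\<in>{1..k}. path_family n (lams j) (mus j) (F j) \<sigma> \<and> covers n (F j) (Hs j))
      \<and> (\<forall>j. j \<notin> {1..k} \<longrightarrow> F j = (\<lambda>_ _. 0))}))"

end

theory Submission
  imports Defs "HOL-Library.Indicator_Function"
begin

(* Expanding B(I) = (1 + s_i1) ... (1 + s_im) with i1 < ... < im gives the sum, over all
   J \<subseteq> I, of the products s_J of the s_j (j in J) in increasing order.  These 2^|I|
   permutations are pairwise distinct, because s_J maps i+1 to i exactly when i is in J;
   hence B(I) is the indicator function of {s_J | J \<subseteq> I}.  The coefficient of a
   permutation in beta of a multinetwork counts k-tuples of covering families of that common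
   type, so it is the product of its coefficients in the beta(H_j); by the distinctness of the
   s_J, the product of the indicators of {s_J | J \<subseteq> I_j} is the indicator of
   {s_J | J \<subseteq> I_1 \<inter> ... \<inter> I_k}. *)

lemma sorted_list_of_set_insert_max:
  assumes "finite A" "\<forall>x\<in>A. x < a"
  shows "sorted_list_of_set (insert a A) = sorted_list_of_set A @ [a]"
proof -
  have "A - {a} = A" using assms(2) by auto
  then show ?thesis
    using assms by (simp add: sorted_insort_is_snoc less_imp_le)
qed

(* The permutation s_x1 ... s_xm of the word [x1, ..., xm]; with the product convention of
   gmult, s_x1 acts first. *)
definition word_perm :: "nat list \<Rightarrow> nat \<Rightarrow> nat" where
  "word_perm xs = foldl (\<lambda>w i. transpose i (Suc i) \<circ> w) id xs"

lemma word_perm_Nil [simp]: "word_perm [] = id"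
  by (simp add: word_perm_def)

lemma word_perm_snoc [simp]: "word_perm (xs @ [a]) = transpose a (Suc a) \<circ> word_perm xs"
  by (simp add: word_perm_def)

lemma word_perm_append: "word_perm (xs @ ys) = word_perm ys \<circ> word_perm xs"
  by (induction ys rule: rev_induct) (simp_all flip: append_assoc add: comp_assoc)

lemma word_perm_fixes: "y \<notin> set xs \<Longrightarrow> y \<notin> Suc ` set xs \<Longrightarrow> word_perm xs y = y"
  by (induction xs rule: rev_induct) auto

lemma word_perm_Suc_ge: "x \<notin> set xs \<Longrightarrow> Suc x \<le> word_perm xs (Suc x)"
  by (induction xs rule: rev_induct) (auto simp: transpose_def)

lemma word_perm_sorted_Suc:
  assumes "sorted_wrt (<) xs" "x \<in> set xs"
  shows "word_perm xs (Suc x) = x"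
proof -
  obtain ys zs where xs: "xs = (ys @ [x]) @ zs"
    using split_list[OF assms(2)] by auto
  have "\<forall>y\<in>set ys. y < x" "\<forall>z\<in>set zs. x < z"
    using assms(1) by (auto simp: xs sorted_wrt_append)
  then have "word_perm ys (Suc x) = Suc x" "word_perm zs x = x"
    by (auto intro!: word_perm_fixes)
  then show ?thesis
    unfolding xs word_perm_append by (simp add: word_perm_snoc[of "[]", simplified])
qed

lemma word_perm_permutes: "set xs \<subseteq> {1..n-1} \<Longrightarrow> word_perm xs permutes {1..n}"
  by (induction xs rule: rev_induct) (auto intro!: permutes_compose permutes_swap_id permutes_id)

definition incr_word_perm :: "nat set \<Rightarrow> nat \<Rightarrow> nat" where
  "incr_word_perm J = word_perm (sorted_list_of_set J)"

lemma incr_word_perm_empty [simp]: "incr_word_perm {} = id"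
  by (simp add: incr_word_perm_def)

lemma incr_word_perm_Suc_eq_iff:
  "finite J \<Longrightarrow> incr_word_perm J (Suc x) = x \<longleftrightarrow> x \<in> J"
  using word_perm_sorted_Suc[of "sorted_list_of_set J" x] word_perm_Suc_ge[of x "sorted_list_of_set J"]
  by (force simp: incr_word_perm_def)

lemma inj_on_incr_word_perm: "inj_on incr_word_perm (Collect finite)"
  by (rule inj_onI) (auto simp: set_eq_iff simp flip: incr_word_perm_Suc_eq_iff)

lemma incr_word_perm_permutes: "J \<subseteq> {1..n-1} \<Longrightarrow> incr_word_perm J permutes {1..n}"
  unfolding incr_word_perm_def
  by (rule word_perm_permutes) (simp add: finite_subset)

lemma incr_word_perm_fixes_Suc_max:
  "finite J \<Longrightarrow> \<forall>j\<in>J. j < a \<Longrightarrow> incr_word_perm J (Suc a) = Suc a"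
  unfolding incr_word_perm_def by (rule word_perm_fixes) auto

lemma incr_word_perm_insert_max:
  assumes "finite J" "\<forall>j\<in>J. j < a"
  shows "incr_word_perm (insert a J) = transpose a (Suc a) \<circ> incr_word_perm J"
  unfolding incr_word_perm_def sorted_list_of_set_insert_max[OF assms] by simp

lemma incr_word_perms_insert_max:
  assumes "finite I" "\<forall>i\<in>I. i < a"
  shows "incr_word_perm ` Pow (insert a I)
           = incr_word_perm ` Pow I \<union> (\<lambda>w. transpose a (Suc a) \<circ> w) ` incr_word_perm ` Pow I"
proof -
  have insert_J: "incr_word_perm (insert a J) = transpose a (Suc a) \<circ> incr_word_perm J"
    if "J \<in> Pow I" for J
    using that assms by (intro incr_word_perm_insert_max) (auto intro: finite_subset)
  have "(\<lambda>J. incr_word_perm (insert a J)) ` Pow I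
               = (\<lambda>w. transpose a (Suc a) \<circ> w) ` incr_word_perm ` Pow I"
    unfolding image_image by (rule image_cong[OF refl insert_J])
  then show ?thesis
    by (simp add: Pow_insert image_Un image_image)
qed

lemma gmult_gadd_right: "gmult n a (gadd b c) = gadd (gmult n a b) (gmult n a c)"
  by (auto simp: gmult_def gadd_def distrib_left sum.distrib fun_eq_iff)

lemma gmult_gbasis_right:
  assumes "\<pi> permutes {1..n}"
  shows "gmult n a (gbasis n \<pi>) \<sigma> = (if \<sigma> permutes {1..n} then a (inv \<pi> \<circ> \<sigma>) else 0)"
proof (cases "\<sigma> permutes {1..n}")
  case True
  have "\<sigma> \<circ> inv \<tau> = \<pi> \<longleftrightarrow> \<tau> = inv \<pi> \<circ> \<sigma>" if "\<tau> permutes {1..n}" for \<tau>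
    using permutes_inv_o[OF that] permutes_inv_o[OF assms]
    by (metis comp_assoc comp_id fun.map_id)
  then have "gmult n a (gbasis n \<pi>) \<sigma> = (\<Sum>\<tau>\<in>{\<tau>. \<tau> permutes {1..n}}. if \<tau> = inv \<pi> \<circ> \<sigma> then a \<tau> else 0)"
    using True assms by (auto simp: gmult_def gbasis_def intro!: sum.cong)
  also have "\<dots> = a (inv \<pi> \<circ> \<sigma>)"
    using True assms by (simp add: finite_permutations permutes_compose permutes_inv)
  finally show ?thesis using True by simp
qed (simp add: gmult_def)

lemma gmult_one_plus_s_gen:
  assumes "i \<in> {1..n-1}"
  shows "gmult n a (gadd (gbasis n id) (s_gen n i)) \<sigma>
           = (if \<sigma> permutes {1..n} then a \<sigma> + a (transpose i (Suc i) \<circ> \<sigma>) else 0)"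
proof -
  have "transpose i (Suc i) permutes {1..n}"
    using assms by (intro permutes_swap_id) auto
  then show ?thesis
    unfolding gmult_gadd_right s_gen_def by (simp add: gadd_def gmult_gbasis_right permutes_id)
qed

lemma BB_insert_max:
  assumes "finite I" "\<forall>i\<in>I. i < a"
  shows "BB n (insert a I) = gmult n (BB n I) (gadd (gbasis n id) (s_gen n a))"
  unfolding BB_def sorted_list_of_set_insert_max[OF assms] by simp

lemma BB_eq_indicator:
  assumes "I \<subseteq> {1..n-1}"
  shows "BB n I = indicator (incr_word_perm ` Pow I)"
  using finite_subset[OF assms finite_atLeastAtMost] assms
proof (induction I rule: finite_linorder_max_induct)
  case empty
  then show ?case
    by (auto simp: BB_def gbasis_def permutes_id fun_eq_iff split: split_indicator)
next
  case (insert a I)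
  let ?t = "transpose a (Suc a)"
  let ?W = "incr_word_perm ` Pow I"
  have a: "a \<in> {1..n-1}" and IH: "BB n I = indicator ?W"
    using insert by auto
  have "w (Suc a) = Suc a" if "w \<in> ?W" for w
    \<comment> \<open>so \<open>?W\<close> and its translate by \<open>?t\<close>, which moves \<open>Suc a\<close>, are disjoint\<close>
    using that insert.hyps by (auto intro!: incr_word_perm_fixes_Suc_max intro: finite_subset)
  then have disjoint: "\<sigma> \<notin> ?W" if "?t \<circ> \<sigma> \<in> ?W" for \<sigma>
    using that by (metis comp_apply transpose_apply_second transpose_involutory n_not_Suc_n)
  have shifted: "\<sigma> \<in> (\<lambda>w. ?t \<circ> w) ` ?W \<longleftrightarrow> ?t \<circ> \<sigma> \<in> ?W" for \<sigma>
    using image_eqI[of \<sigma> "\<lambda>w. ?t \<circ> w" "?t \<circ> \<sigma>" ?W] by (auto simp flip: comp_assoc)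
  show ?case
  proof
    fix \<sigma>
    show "BB n (insert a I) \<sigma> = indicator (incr_word_perm ` Pow (insert a I)) \<sigma>"
    proof (cases "\<sigma> permutes {1..n}")
      case True
      then have "BB n (insert a I) \<sigma> = indicator ?W \<sigma> + indicator ?W (?t \<circ> \<sigma>)"
        by (simp add: BB_insert_max insert.hyps gmult_one_plus_s_gen[OF a] IH)
      also have "\<dots> = indicator (?W \<union> (\<lambda>w. ?t \<circ> w) ` ?W) \<sigma>"
        using disjoint shifted by (auto split: split_indicator)
      also have "\<dots> = indicator (incr_word_perm ` Pow (insert a I)) \<sigma>"
        by (simp add: incr_word_perms_insert_max insert.hyps)
      finally show ?thesis .
    next
      case False
      then have "\<sigma> \<notin> incr_word_perm ` Pow (insert a I)"
        using insert.prems incr_word_perm_permutes by blast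
      then show ?thesis
        using False by (simp add: BB_insert_max insert.hyps gmult_one_plus_s_gen[OF a])
    qed
  qed
qed

lemma incr_word_perms_Inter:
  assumes "finite K" "K \<noteq> {}" "\<forall>j\<in>K. finite (I j)"
  shows "incr_word_perm ` Pow (\<Inter>j\<in>K. I j) = (\<Inter>j\<in>K. incr_word_perm ` Pow (I j))"
proof -
  obtain j where "j \<in> K" using assms(2) by blast
  then show ?thesis
    unfolding Pow_INT_eq using assms(3)
    by (intro image_INT[OF inj_on_incr_word_perm]) (auto intro: finite_subset)
qed

lemma prod_indicator:
  "finite K \<Longrightarrow> (\<Prod>j\<in>K. indicator (A j) x) = (indicator (\<Inter>j\<in>K. A j) x :: 'a::comm_semiring_1)"
  by (induction K rule: finite_induct) (simp_all add: indicator_inter_arith)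

lemma prod_power_int:
  "(\<Prod>j\<in>K. (x::'a::field) powi e j) = x powi (\<Sum>j\<in>K. e j)" if "x \<noteq> 0"
  by (induction K rule: infinite_finite_induct) (simp_all add: power_int_add that)

lemma card_extensional_tuples:
  assumes "finite A"
  shows "card {F. (\<forall>j\<in>A. F j \<in> S j) \<and> (\<forall>j. j \<notin> A \<longrightarrow> F j = d)} = (\<Prod>j\<in>A. card (S j))"
proof -
  let ?T = "{F. (\<forall>j\<in>A. F j \<in> S j) \<and> (\<forall>j. j \<notin> A \<longrightarrow> F j = d)}"
  have "bij_betw (\<lambda>F. restrict F A) ?T (PiE A S)"
    by (rule bij_betw_byWitness[where f' = "\<lambda>G j. if j \<in> A then G j else d"])
      (auto simp: fun_eq_iff PiE_def extensional_def)
  then show ?thesis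
    using assms by (simp add: bij_betw_same_card card_PiE)
qed

lemma beta_multi_eq_prod_beta:
  "beta_multi n k lams mus Hs \<sigma> = (\<Prod>j\<in>{1..k}. beta n (lams j) (mus j) (Hs j) \<sigma>)"
  using card_extensional_tuples[of "{1..k}"
      "\<lambda>j. {fam. path_family n (lams j) (mus j) fam \<sigma> \<and> covers n fam (Hs j)}" "\<lambda>_ _. 0"]
  by (simp add: beta_multi_def beta_def)

theorem mainTheorem3:
  fixes n k :: nat
    and lams mus :: "nat \<Rightarrow> nat \<Rightarrow> nat"
    and Hs :: "nat \<Rightarrow> (int \<times> int) \<times> (int \<times> int) \<Rightarrow> nat"
    and I :: "nat \<Rightarrow> nat set"
    and eps :: "nat \<Rightarrow> int"
  assumes "k \<ge> 1"
    and "\<forall>j\<in>{1..k}. is_partition (lams j) \<and> is_partition (mus j) \<and> subpart (mus j) (lams j)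
                     \<and> len_le (lams j) n \<and> \<not> has_3x2_block (lams j) (mus j)"
    and "\<forall>j\<in>{1..k}. subnetwork n (lams j) (mus j) (Hs j)"
    and "\<forall>j\<in>{1..k}. I j \<subseteq> {1..n-1}
                     \<and> beta n (lams j) (mus j) (Hs j) = gscale (2 powi eps j) (BB n (I j))"
  shows "beta_multi n k lams mus Hs
           = gscale (2 powi (\<Sum>j\<in>{1..k}. eps j)) (BB n (\<Inter>j\<in>{1..k}. I j))"
proof
  fix \<sigma>
  let ?W = "\<lambda>J. incr_word_perm ` Pow J"
  have I_sub: "\<forall>j\<in>{1..k}. I j \<subseteq> {1..n-1}"
    and beta_eq: "\<forall>j\<in>{1..k}. beta n (lams j) (mus j) (Hs j) \<sigma> = 2 powi eps j * indicator (?W (I j)) \<sigma>"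
    using assms(4) by (auto simp: gscale_def BB_eq_indicator)
  have Inter_sub: "(\<Inter>j\<in>{1..k}. I j) \<subseteq> {1..n-1}"
    using assms(1) I_sub by (intro INF_lower2[of 1]) auto
  have finite_I: "\<forall>j\<in>{1..k}. finite (I j)"
    using I_sub by (auto intro: finite_subset)
  have "beta_multi n k lams mus Hs \<sigma> = (\<Prod>j\<in>{1..k}. 2 powi eps j * indicator (?W (I j)) \<sigma>)"
    using beta_eq by (simp add: beta_multi_eq_prod_beta)
  also have "\<dots> = 2 powi (\<Sum>j\<in>{1..k}. eps j) * indicator (\<Inter>j\<in>{1..k}. ?W (I j)) \<sigma>"
    by (simp add: prod.distrib prod_power_int prod_indicator)
  also have "\<dots> = gscale (2 powi (\<Sum>j\<in>{1..k}. eps j)) (BB n (\<Inter>j\<in>{1..k}. I j)) \<sigma>"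
    using assms(1) Inter_sub finite_I
    by (simp add: gscale_def BB_eq_indicator incr_word_perms_Inter)
  finally show "beta_multi n k lams mus Hs \<sigma>
      = gscale (2 powi (\<Sum>j\<in>{1..k}. eps j)) (BB n (\<Inter>j\<in>{1..k}. I j)) \<sigma>" .
qed

end
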